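(* Let $\lambda\in\mathbb C$, $n\in\mathbb N$, $0<\rho\le1$, and let $C_{\rho,\lambda}=\operatorname{conv}\{(\mu,\mu^2,\dots,\mu^n):\mu\in\mathbb C,\ |\mu-\lambda|\le\rho\}\subset\mathbb C^n$. Then $$\operatorname{dist}\{(\lambda,\lambda^2,\dots,\lambda^n),\partial C_{\rho,\lambda}\}\ge\frac{\rho^n}{4^n\max\{1,|\lambda|^n\}},$$ and if $\lambda=0$ then $\operatorname{dist}\{(0,\dots,0),\partial C_{\rho,0}\}\ge\rho^n/2^n$.
   Context: $\operatorname{conv}$ denotes convex hull, $\partial$ topological boundary in $\mathbb C^n$, and distances are taken with respect to the norm $\|z\|=\max_j|z_j|$ on $\mathbb C^n$. *)

theory Defs
  imports "HOL-Analysis.Analysis"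
begin

definition maxnorm :: "complex ^ 'n \<Rightarrow> real" where
  "maxnorm x = Max (range (\<lambda>i. norm (x $ i)))"

definition maxdist :: "complex ^ 'n \<Rightarrow> (complex ^ 'n) set \<Rightarrow> real" where
  "maxdist a S = Inf {maxnorm (a - y) | y. y \<in> S}"

text \<open>Moment point (mu, mu^2, ..., mu^n); coordinates labelled by idx i in {1..n}.\<close>
definition moment :: "('n \<Rightarrow> nat) \<Rightarrow> complex \<Rightarrow> complex ^ 'n" where
  "moment idx \<mu> = (\<chi> i. \<mu> ^ idx i)"

definition Cset :: "('n \<Rightarrow> nat) \<Rightarrow> real \<Rightarrow> complex \<Rightarrow> (complex ^ 'n) set" where
  "Cset idx \<rho> lam = convex hull {moment idx \<mu> | \<mu>. cmod (\<mu> - lam) \<le> \<rho>}"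

end

theory Submission
  imports Defs
begin

text \<open>
  Let \<zeta>_0, ..., \<zeta>_2n be the (2n+1)-st roots of unity. For probability weights w_j the point
  \<Sum>_j w_j (\<mu>_j, ..., \<mu>_j^n) with \<mu>_j = \<lambda> + \<rho> \<zeta>_j lies in C, and by the binomial theorem its
  l-th coordinate is \<Sum>_(t \<le> l) (l choose t) \<lambda>^(l-t) \<rho>^t m_t, where m_t = \<Sum>_j w_j \<zeta>_j^t.
  The Fejer-type weights w_j = (1 + 2 Re \<Sum>_i a_i \<zeta>_j^(-i)) / (2n+1) are nonnegative when
  \<Sum>_i |a_i| \<le> 1/2, and their moments are m_0 = 1 and m_t = a_t for 1 \<le> t \<le> n.
  Given z with |z_l - \<lambda>^l| \<le> \<delta>, binomial inversion produces c_t with |c_t| \<le> (1 + |\<lambda>|)^t \<delta>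
  such that the choice a_t = c_t / \<rho>^t hits z. Hence the max-norm ball of radius \<delta> about
  (\<lambda>, ..., \<lambda>^n) lies in C as soon as (1 + |\<lambda>|)^t \<delta> \<le> \<rho>^t / 2^n for 1 \<le> t \<le> n, and both
  radii of the theorem satisfy this.
\<close>

definition root_unity :: "nat \<Rightarrow> real \<Rightarrow> complex" where
  "root_unity m x = exp (complex_of_real (2 * pi * x / real m) * \<i>)"

lemma root_unity_add: "root_unity m (x + y) = root_unity m x * root_unity m y"
  unfolding root_unity_def by (simp add: add_divide_distrib distrib_left distrib_right exp_add)

lemma root_unity_power: "root_unity m x ^ t = root_unity m (real t * x)"
  unfolding root_unity_def by (simp flip: exp_of_nat_mult add: mult_ac)

lemma cnj_root_unity: "cnj (root_unity m x) = root_unity m (- x)"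
  unfolding root_unity_def by (simp add: exp_cnj)

lemma norm_root_unity [simp]: "norm (root_unity m x) = 1"
  unfolding root_unity_def by simp

lemma sum_root_unity:
  fixes s :: int
  assumes "\<bar>s\<bar> < int m"
  shows "(\<Sum>j<m. root_unity m (real j * of_int s)) = (if s = 0 then of_nat m else 0)"
proof (cases "s = 0")
  case False
  have m: "m > 0" using assms by simp
  have "\<not> int m dvd s"
    using False assms by (metis dvd_abs_iff zdvd_imp_le zero_less_abs_iff not_le)
  define \<omega> where "\<omega> = root_unity m (of_int s)"
  have power: "root_unity m (real j * of_int s) = \<omega> ^ j" for j
    by (simp add: \<omega>_def root_unity_power)
  have "\<omega> ^ m = root_unity m (real m * of_int s)"
    by (simp add: \<omega>_def root_unity_power)
  also have "\<dots> = exp (complex_of_real (2 * pi * of_int s) * \<i>)"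
    unfolding root_unity_def using m by (simp add: mult_ac)
  also have "\<dots> = 1" by (subst exp_eq_1) (auto simp: mult_ac)
  finally have "\<omega> ^ m = 1" .
  moreover have "\<omega> \<noteq> 1"
  proof
    assume "\<omega> = 1"
    then obtain k :: int where "2 * pi * of_int s / real m = of_int (2 * k) * pi"
      unfolding \<omega>_def root_unity_def by (auto simp: exp_eq_1)
    hence "of_int s = real m * of_int k" using m by (simp add: field_simps)
    hence "s = int m * k" by (metis of_int_eq_iff of_int_mult of_int_of_nat_eq)
    with \<open>\<not> int m dvd s\<close> show False by simp
  qed
  ultimately show ?thesis using False unfolding power sum_gp_strict by simp
qed (simp add: root_unity_def)

definition fejer_weight :: "nat \<Rightarrow> (nat \<Rightarrow> complex) \<Rightarrow> nat \<Rightarrow> real" where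
  "fejer_weight n a j =
     (1 + 2 * Re (\<Sum>i\<in>{1..n}. a i * root_unity (2*n+1) (- (real j * real i)))) / real (2*n+1)"

lemma fejer_weight_nonneg:
  assumes "(\<Sum>i\<in>{1..n}. norm (a i)) \<le> 1/2"
  shows "fejer_weight n a j \<ge> 0"
proof -
  let ?S = "\<Sum>i\<in>{1..n}. a i * root_unity (2*n+1) (- (real j * real i))"
  have "norm ?S \<le> (\<Sum>i\<in>{1..n}. norm (a i * root_unity (2*n+1) (- (real j * real i))))"
    by (rule norm_sum)
  also have "\<dots> = (\<Sum>i\<in>{1..n}. norm (a i))" by (simp add: norm_mult)
  finally have "\<bar>Re ?S\<bar> \<le> 1/2" using assms abs_Re_le_cmod order_trans by fastforce
  thus ?thesis unfolding fejer_weight_def by (intro divide_nonneg_pos) auto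
qed

lemma fejer_weight_times_root_unity:
  fixes n :: nat
  defines "m \<equiv> 2*n+1"
  shows "complex_of_real (fejer_weight n a j) * root_unity m (real j * real t)
       = (root_unity m (real j * of_int (int t))
          + (\<Sum>i\<in>{1..n}. a i * root_unity m (real j * of_int (int t - int i)))
          + (\<Sum>i\<in>{1..n}. cnj (a i) * root_unity m (real j * of_int (int t + int i)))) / of_nat m"
proof -
  define S where "S = (\<Sum>i\<in>{1..n}. a i * root_unity m (- (real j * real i)))"
  have "complex_of_real (2 * Re S) = S + cnj S"
    by (simp add: complex_add_cnj)
  hence weight: "complex_of_real (fejer_weight n a j) = (1 + S + cnj S) / of_nat m"
    unfolding fejer_weight_def m_def[symmetric] S_def[symmetric]
    by (simp add: of_real_def[symmetric] field_simps)
  have shift: "root_unity m (\<sigma> * (real j * real i)) * root_unity m (real j * real t)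
      = root_unity m (real j * of_int (int t + \<sigma> * int i))" if "\<sigma> \<in> {-1, 1}" for i \<sigma>
    using that by (auto simp flip: root_unity_add simp: algebra_simps)
  have "S * root_unity m (real j * real t)
      = (\<Sum>i\<in>{1..n}. a i * root_unity m (real j * of_int (int t - int i)))"
    unfolding S_def sum_distrib_right using shift[of "-1"] by (simp add: mult.assoc)
  moreover have "cnj S * root_unity m (real j * real t)
      = (\<Sum>i\<in>{1..n}. cnj (a i) * root_unity m (real j * of_int (int t + int i)))"
    unfolding S_def cnj_sum sum_distrib_right using shift[of 1]
    by (simp add: cnj_root_unity mult.assoc)
  ultimately show ?thesis unfolding weight by (simp add: distrib_right)
qed

lemma sum_fejer_weight_root_unity:
  assumes "t \<le> n"
  shows "(\<Sum>j<2*n+1. complex_of_real (fejer_weight n a j) * root_unity (2*n+1) (real j * real t))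
       = (if t = 0 then 1 else a t)"
proof -
  define m where "m = 2*n+1"
  have m0: "(of_nat m :: complex) \<noteq> 0" unfolding m_def of_nat_eq_0_iff by simp
  define R where "R s = (\<Sum>j<m. root_unity m (real j * of_int s))" for s
  have R: "R s = (if s = 0 then of_nat m else 0)" if "\<bar>s\<bar> \<le> 2 * int n" for s
    unfolding R_def using that by (intro sum_root_unity) (simp add: m_def)
  have "(\<Sum>j<m. complex_of_real (fejer_weight n a j) * root_unity m (real j * real t))
     = (\<Sum>j<m. root_unity m (real j * of_int (int t))
          + (\<Sum>i\<in>{1..n}. a i * root_unity m (real j * of_int (int t - int i)))
          + (\<Sum>i\<in>{1..n}. cnj (a i) * root_unity m (real j * of_int (int t + int i)))) / of_nat m"
    by (simp only: m_def fejer_weight_times_root_unity sum_divide_distrib)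
  also have "\<dots> = (R (int t) + (\<Sum>i\<in>{1..n}. a i * R (int t - int i))
          + (\<Sum>i\<in>{1..n}. cnj (a i) * R (int t + int i))) / of_nat m"
    unfolding R_def sum.distrib sum_distrib_left by (simp only: sum.swap[of _ "{..<m}"])
  also have "(\<Sum>i\<in>{1..n}. a i * R (int t - int i)) = (\<Sum>i\<in>{1..n}. if i = t then of_nat m * a t else 0)"
    using assms by (intro sum.cong refl) (auto simp: R)
  also have "(\<Sum>i\<in>{1..n}. cnj (a i) * R (int t + int i)) = 0"
    using assms by (intro sum.neutral ballI) (auto simp: R)
  also have "(R (int t) + (\<Sum>i\<in>{1..n}. if i = t then of_nat m * a t else 0) + 0) / of_nat m
      = (if t = 0 then 1 else a t)"
    using assms m0 by (auto simp: R)
  finally show ?thesis by (simp only: m_def)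
qed

lemma binomial_inversion_kernel:
  fixes x :: "'a::comm_ring_1"
  assumes "s \<le> l"
  shows "(\<Sum>t\<in>{s..l}. of_nat (l choose t) * x^(l-t) * (of_nat (t choose s) * (-x)^(t-s)))
       = (if s = l then 1 else 0)"
proof -
  have "(\<Sum>t\<in>{s..l}. of_nat (l choose t) * x^(l-t) * (of_nat (t choose s) * (-x)^(t-s)))
      = (\<Sum>t\<in>{s..l}. of_nat (l choose s) * (of_nat ((l-s) choose (t-s)) * (-x)^(t-s) * x^((l-s)-(t-s))))"
  proof (intro sum.cong refl)
    fix t assume t: "t \<in> {s..l}"
    have "(l choose t) * (t choose s) = (l choose s) * ((l - s) choose (t - s))"
      using t by (intro choose_mult) auto
    hence choose: "(of_nat (l choose t) * of_nat (t choose s) :: 'a)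
        = of_nat (l choose s) * of_nat ((l - s) choose (t - s))"
      by (metis of_nat_mult)
    have "of_nat (l choose t) * x^(l-t) * (of_nat (t choose s) * (-x)^(t-s))
        = (of_nat (l choose t) * of_nat (t choose s)) * ((-x)^(t-s) * x^(l-t))"
      by (simp only: mult_ac)
    also have "\<dots> = (of_nat (l choose s) * of_nat ((l-s) choose (t-s))) * ((-x)^(t-s) * x^((l-s)-(t-s)))"
      using t by (simp only: choose) (simp add: diff_diff_eq2)
    finally show "of_nat (l choose t) * x^(l-t) * (of_nat (t choose s) * (-x)^(t-s))
        = of_nat (l choose s) * (of_nat ((l-s) choose (t-s)) * (-x)^(t-s) * x^((l-s)-(t-s)))"
      by (simp only: mult_ac)
  qed
  also have "\<dots> = of_nat (l choose s) * (\<Sum>u\<in>{0..l-s}. of_nat ((l-s) choose u) * (-x)^u * x^((l-s)-u))"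
    unfolding sum_distrib_left[symmetric] sum.atLeastAtMost_shift_0[OF assms] by (simp add: comp_def)
  also have "\<dots> = of_nat (l choose s) * (-x + x)^(l-s)"
    by (simp only: binomial_ring atLeast0AtMost)
  finally show ?thesis using assms by (simp add: power_0_left)
qed

lemma binomial_inversion:
  fixes x :: "'a::comm_ring_1" and D :: "nat \<Rightarrow> 'a"
  shows "(\<Sum>t\<le>l. of_nat (l choose t) * x^(l-t) * (\<Sum>s\<le>t. of_nat (t choose s) * (-x)^(t-s) * D s)) = D l"
proof -
  define K where "K t s = of_nat (l choose t) * x^(l-t) * (of_nat (t choose s) * (-x)^(t-s))" for t s
  have lower: "{s. s \<in> {..l} \<and> s \<le> t} = {..t}" if "t \<le> l" for t
    using that by auto
  have upper: "{t. t \<in> {..l} \<and> s \<le> t} = {s..l}" for s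
    by auto
  have "(\<Sum>t\<le>l. of_nat (l choose t) * x^(l-t) * (\<Sum>s\<le>t. of_nat (t choose s) * (-x)^(t-s) * D s))
      = (\<Sum>t\<le>l. \<Sum>s\<in>{s. s \<in> {..l} \<and> s \<le> t}. D s * K t s)"
    using lower by (simp add: K_def sum_distrib_left mult_ac)
  also have "\<dots> = (\<Sum>s\<le>l. \<Sum>t\<in>{t. t \<in> {..l} \<and> s \<le> t}. D s * K t s)"
    by (rule sum.swap_restrict) simp_all
  also have "\<dots> = (\<Sum>s\<le>l. if s = l then D s else 0)"
    unfolding upper K_def
    by (intro sum.cong refl) (simp add: binomial_inversion_kernel flip: sum_distrib_left)
  also have "\<dots> = D l" by simp
  finally show ?thesis .
qed

lemma sum_fejer_weight_power:
  assumes "l \<le> n"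
  shows "(\<Sum>j<2*n+1. complex_of_real (fejer_weight n a j) * (lam + of_real \<rho> * root_unity (2*n+1) (real j))^l)
     = (\<Sum>t\<le>l. of_nat (l choose t) * lam^(l-t) * (of_real \<rho>^t * (if t = 0 then 1 else a t)))"
proof -
  define m where "m = 2*n+1"
  define w where "w j = complex_of_real (fejer_weight n a j)" for j
  have binomial: "(lam + of_real \<rho> * root_unity m (real j))^l
      = (\<Sum>t\<le>l. of_nat (l choose t) * lam^(l-t) * of_real \<rho>^t * root_unity m (real j * real t))" for j
    by (simp add: add.commute[of lam] binomial_ring power_mult_distrib root_unity_power mult_ac)
  have "(\<Sum>j<m. w j * (lam + of_real \<rho> * root_unity m (real j))^l)
     = (\<Sum>t\<le>l. of_nat (l choose t) * lam^(l-t) * of_real \<rho>^t * (\<Sum>j<m. w j * root_unity m (real j * real t)))"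
    unfolding binomial sum_distrib_left by (subst sum.swap) (simp add: mult_ac)
  also have "\<dots> = (\<Sum>t\<le>l. of_nat (l choose t) * lam^(l-t) * (of_real \<rho>^t * (if t = 0 then 1 else a t)))"
    using assms unfolding m_def w_def
    by (intro sum.cong refl, subst sum_fejer_weight_root_unity) (auto simp: mult_ac)
  finally show ?thesis unfolding m_def w_def .
qed

lemma norm_binomial_transform_le:
  fixes x :: "'a::real_normed_field"
  assumes "\<And>s. s \<le> t \<Longrightarrow> norm (D s) \<le> \<delta>"
  shows "norm (\<Sum>s\<le>t. of_nat (t choose s) * (-x)^(t-s) * D s) \<le> (1 + norm x)^t * \<delta>"
proof -
  have "norm (\<Sum>s\<le>t. of_nat (t choose s) * (-x)^(t-s) * D s)
      \<le> (\<Sum>s\<le>t. of_nat (t choose s) * 1^s * norm x^(t-s) * \<delta>)"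
  proof (rule order_trans[OF norm_sum sum_mono])
    fix s assume "s \<in> {..t}"
    thus "norm (of_nat (t choose s) * (-x)^(t-s) * D s) \<le> of_nat (t choose s) * 1^s * norm x^(t-s) * \<delta>"
      using assms by (auto simp: norm_mult norm_power intro!: mult_left_mono)
  qed
  also have "\<dots> = (1 + norm x)^t * \<delta>"
    by (simp add: binomial_ring sum_distrib_right)
  finally show ?thesis .
qed

lemma nat_div_two_power_le_half: "real n / 2^n \<le> 1/2"
proof (cases "n = 0")
  case False
  have "n - 1 < 2^(n - 1)" by (rule less_exp)
  hence "2 * n \<le> 2 * 2^(n - 1)" using False by linarith
  also have "\<dots> = 2^n" using False by (simp flip: power_Suc)
  finally have "2 * real n \<le> 2^n" by (metis of_nat_le_iff of_nat_mult of_nat_numeral of_nat_power)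
  thus ?thesis by (simp add: field_simps)
qed simp

lemma norm_nth_le_maxnorm: "norm (x $ i) \<le> maxnorm x"
  unfolding maxnorm_def by (rule Max_ge) auto

lemma maxnorm_le: "(\<And>i. norm (x $ i) \<le> r) \<Longrightarrow> maxnorm x \<le> r"
  unfolding maxnorm_def by (subst Max_le_iff) auto

lemma maxnorm_triangle: "maxnorm (x + y) \<le> maxnorm x + maxnorm y"
proof (rule maxnorm_le)
  fix i
  show "norm ((x + y) $ i) \<le> maxnorm x + maxnorm y"
    using norm_triangle_ineq[of "x $ i" "y $ i"] norm_nth_le_maxnorm[of x i] norm_nth_le_maxnorm[of y i]
    by simp
qed

lemma maxnorm_le_norm: "maxnorm x \<le> norm x"
  by (rule maxnorm_le) (rule Finite_Cartesian_Product.norm_nth_le)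

lemma maxdist_frontier_ge:
  assumes ball: "\<And>z. maxnorm (a - z) \<le> \<delta> \<Longrightarrow> z \<in> C" and "bounded C" "\<delta> \<ge> 0"
  shows "maxdist a (frontier C) \<ge> \<delta>"
proof -
  have "a \<in> C" using ball[of a] \<open>\<delta> \<ge> 0\<close> by (simp add: maxnorm_def)
  hence "frontier C \<noteq> {}" using \<open>bounded C\<close> frontier_eq_empty not_bounded_UNIV by blast
  moreover have "maxnorm (a - y) \<ge> \<delta>" if y: "y \<in> frontier C" for y
  proof (rule ccontr)
    assume "\<not> ?thesis"
    have "ball y (\<delta> - maxnorm (a - y)) \<subseteq> C"
    proof
      fix z assume "z \<in> ball y (\<delta> - maxnorm (a - y))"
      hence "maxnorm (y - z) < \<delta> - maxnorm (a - y)"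
        using maxnorm_le_norm[of "y - z"] by (simp add: dist_norm)
      moreover have "maxnorm (a - z) \<le> maxnorm (a - y) + maxnorm (y - z)"
        using maxnorm_triangle[of "a - y" "y - z"] by simp
      ultimately show "z \<in> C" by (intro ball) linarith
    qed
    with \<open>\<not> ?thesis\<close> have "y \<in> interior C" by (intro interiorI[OF open_ball]) auto
    with y show False by (simp add: frontier_def)
  qed
  ultimately show ?thesis unfolding maxdist_def by (intro cInf_greatest) auto
qed

lemma bounded_Cset: "bounded (Cset idx \<rho> lam)"
proof -
  have "{moment idx \<mu> | \<mu>. cmod (\<mu> - lam) \<le> \<rho>} = moment idx ` cball lam \<rho>"
    by (auto simp: dist_norm norm_minus_commute)
  moreover have "continuous_on (cball lam \<rho>) (moment idx)"
    unfolding moment_def by (intro continuous_on_vec_lambda continuous_intros)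
  ultimately have "compact {moment idx \<mu> | \<mu>. cmod (\<mu> - lam) \<le> \<rho>}"
    by (metis compact_continuous_image compact_cball)
  thus ?thesis unfolding Cset_def by (intro compact_imp_bounded compact_convex_hull)
qed

lemma binomial_moment_point_in_Cset:
  fixes idx :: "'n::finite \<Rightarrow> nat"
  assumes bij: "bij_betw idx UNIV {1..CARD('n)}" and "\<rho> \<ge> 0"
    and a: "(\<Sum>i\<in>{1..CARD('n)}. norm (a i)) \<le> 1/2"
  shows "(\<chi> i. \<Sum>t\<le>idx i. of_nat (idx i choose t) * lam^(idx i - t) * (of_real \<rho>^t * (if t = 0 then 1 else a t)))
           \<in> Cset idx \<rho> lam"
proof -
  define n where "n = CARD('n)"
  define m where "m = 2*n+1"
  define w where "w j = fejer_weight n a j" for j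
  define y where "y j = moment idx (lam + of_real \<rho> * root_unity m (real j))" for j
  have mem: "(\<Sum>j<m. w j *\<^sub>R y j) \<in> Cset idx \<rho> lam"
    unfolding Cset_def
  proof (rule convex_sum[OF finite_lessThan convex_convex_hull])
    have "complex_of_real (\<Sum>j<m. w j) = 1"
      using sum_fejer_weight_root_unity[of 0 n a] by (simp add: w_def m_def root_unity_def)
    thus "(\<Sum>j<m. w j) = 1" by (simp only: of_real_eq_1_iff)
    show "\<And>j. 0 \<le> w j" unfolding w_def using a n_def by (intro fejer_weight_nonneg) auto
    show "\<And>j. y j \<in> convex hull {moment idx \<mu> |\<mu>. cmod (\<mu> - lam) \<le> \<rho>}"
      unfolding y_def using \<open>\<rho> \<ge> 0\<close> by (intro hull_inc) (auto simp: norm_mult)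
  qed
  have "(\<Sum>j<m. w j *\<^sub>R y j) $ i
      = (\<Sum>t\<le>idx i. of_nat (idx i choose t) * lam^(idx i - t) * (of_real \<rho>^t * (if t = 0 then 1 else a t)))"
    for i
  proof -
    have "idx i \<le> n" unfolding n_def using bij_betw_apply[OF bij] by simp
    have "(\<Sum>j<m. w j *\<^sub>R y j) $ i
        = (\<Sum>j<m. complex_of_real (w j) * (lam + of_real \<rho> * root_unity m (real j))^idx i)"
      unfolding sum_component vector_scaleR_component
      by (simp add: y_def moment_def scaleR_conv_of_real)
    also have "\<dots> = (\<Sum>t\<le>idx i. of_nat (idx i choose t) * lam^(idx i - t)
                          * (of_real \<rho>^t * (if t = 0 then 1 else a t)))"
      unfolding m_def w_def using \<open>idx i \<le> n\<close> by (rule sum_fejer_weight_power)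
    finally show ?thesis .
  qed
  hence "(\<Sum>j<m. w j *\<^sub>R y j)
      = (\<chi> i. \<Sum>t\<le>idx i. of_nat (idx i choose t) * lam^(idx i - t) * (of_real \<rho>^t * (if t = 0 then 1 else a t)))"
    by (simp add: vec_eq_iff)
  with mem show ?thesis by simp
qed

lemma mem_Cset_if_maxnorm_le:
  fixes idx :: "'n::finite \<Rightarrow> nat" and lam :: complex
  assumes bij: "bij_betw idx UNIV {1..CARD('n)}" and "\<rho> > 0" and "\<delta> \<ge> 0"
    and radius: "\<And>t. t \<in> {1..CARD('n)} \<Longrightarrow> (1 + cmod lam)^t * \<delta> / \<rho>^t \<le> 1 / 2^CARD('n)"
    and z: "maxnorm (moment idx lam - z) \<le> \<delta>"
  shows "z \<in> Cset idx \<rho> lam"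
proof -
  define n where "n = CARD('n)"
  define D where "D k = (if k = 0 then 0 else (z - moment idx lam) $ inv_into UNIV idx k)" for k
  define c where "c t = (\<Sum>s\<le>t. of_nat (t choose s) * (-lam)^(t-s) * D s)" for t
  define a where "a t = c t / of_real \<rho>^t" for t
  have D_bound: "norm (D k) \<le> \<delta>" for k
    using \<open>\<delta> \<ge> 0\<close> z norm_nth_le_maxnorm[of "moment idx lam - z"]
    by (auto simp: D_def norm_minus_commute intro: order_trans)
  have "norm (a t) \<le> 1 / 2^n" if "t \<in> {1..n}" for t
  proof -
    have "norm (a t) = norm (c t) / \<rho>^t"
      unfolding a_def using \<open>\<rho> > 0\<close> by (simp add: norm_divide norm_power)
    also have "\<dots> \<le> (1 + cmod lam)^t * \<delta> / \<rho>^t"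
      unfolding c_def using \<open>\<rho> > 0\<close> D_bound
      by (intro divide_right_mono norm_binomial_transform_le) auto
    also have "\<dots> \<le> 1 / 2^n" using radius that unfolding n_def by auto
    finally show ?thesis .
  qed
  hence "(\<Sum>i\<in>{1..n}. norm (a i)) \<le> real n / 2^n"
    using sum_mono[of "{1..n}" "\<lambda>i. norm (a i)" "\<lambda>_. 1 / 2^n"] by simp
  also have "\<dots> \<le> 1/2" by (rule nat_div_two_power_le_half)
  finally have "(\<chi> i. \<Sum>t\<le>idx i. of_nat (idx i choose t) * lam^(idx i - t) * (of_real \<rho>^t * (if t = 0 then 1 else a t)))
           \<in> Cset idx \<rho> lam"
    using bij \<open>\<rho> > 0\<close> unfolding n_def
    by (intro binomial_moment_point_in_Cset) auto
  moreover have "(\<Sum>t\<le>idx i. of_nat (idx i choose t) * lam^(idx i - t) * (of_real \<rho>^t * (if t = 0 then 1 else a t)))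
      = z $ i" for i
  proof -
    define l where "l = idx i"
    have "l \<noteq> 0" "inv_into UNIV idx l = i"
      using bij_betw_apply[OF bij, of i] bij_betw_inv_into_left[OF bij] unfolding l_def by auto
    have "of_real \<rho>^t * (if t = 0 then 1 else a t) = c t + (if t = 0 then 1 else 0)" for t
      using \<open>\<rho> > 0\<close> by (simp add: a_def c_def D_def)
    hence "(\<Sum>t\<le>l. of_nat (l choose t) * lam^(l - t) * (of_real \<rho>^t * (if t = 0 then 1 else a t)))
        = (\<Sum>t\<le>l. of_nat (l choose t) * lam^(l - t) * c t) + lam^l"
      by (simp add: distrib_left sum.distrib sum.atMost_shift)
    also have "\<dots> = D l + lam^l"
      unfolding c_def by (simp only: binomial_inversion)
    also have "\<dots> = z $ i"
      using \<open>l \<noteq> 0\<close> \<open>inv_into UNIV idx l = i\<close> by (simp add: D_def moment_def l_def)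
    finally show ?thesis unfolding l_def .
  qed
  ultimately show ?thesis by (simp add: vec_eq_iff[symmetric])
qed

lemma maxdist_frontier_Cset_ge:
  fixes idx :: "'n::finite \<Rightarrow> nat" and lam :: complex
  assumes "bij_betw idx UNIV {1..CARD('n)}" and "\<rho> > 0" and "\<delta> \<ge> 0"
    and "\<And>t. t \<in> {1..CARD('n)} \<Longrightarrow> (1 + cmod lam)^t * \<delta> / \<rho>^t \<le> 1 / 2^CARD('n)"
  shows "maxdist (moment idx lam) (frontier (Cset idx \<rho> lam)) \<ge> \<delta>"
  using mem_Cset_if_maxnorm_le[OF assms] bounded_Cset \<open>\<delta> \<ge> 0\<close> by (rule maxdist_frontier_ge)

lemma four_power_radius_condition:
  fixes L \<rho> :: real
  assumes "L \<ge> 0" "0 < \<rho>" "\<rho> \<le> 1" "t \<le> n"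
  shows "(1 + L)^t * (\<rho>^n / (4^n * max 1 (L^n))) / \<rho>^t \<le> 1 / 2^n"
proof -
  define M where "M = max 1 L"
  have "M \<ge> 1" unfolding M_def by simp
  have "M^n = max 1 (L^n)"
  proof (cases "L \<le> 1")
    case True
    thus ?thesis using power_le_one[OF \<open>L \<ge> 0\<close> True, of n] by (simp add: M_def)
  next
    case False
    thus ?thesis using one_le_power[of L n] by (simp add: M_def)
  qed
  have "(1 + L)^t \<le> (2 * M)^t" using \<open>L \<ge> 0\<close> unfolding M_def by (intro power_mono) auto
  also have "\<dots> = 2^t * M^t" by (simp add: power_mult_distrib)
  also have "\<dots> \<le> 2^n * M^n" using \<open>t \<le> n\<close> \<open>M \<ge> 1\<close> by (intro mult_mono power_increasing) auto
  finally have "(1 + L)^t \<le> 2^n * M^n" .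
  moreover have "\<rho>^n \<le> \<rho>^t" using assms by (intro power_decreasing) auto
  ultimately have "(1 + L)^t * (\<rho>^n / (4^n * M^n)) / \<rho>^t \<le> (2^n * M^n) * (\<rho>^t / (4^n * M^n)) / \<rho>^t"
    using assms(1,2) \<open>M \<ge> 1\<close> by (intro divide_right_mono mult_mono divide_right_mono) auto
  also have "\<dots> = 2^n / 4^n" using \<open>M \<ge> 1\<close> assms(2) by (simp add: field_simps)
  also have "\<dots> = 1 / 2^n" by (simp add: field_simps flip: power_mult_distrib)
  finally show ?thesis unfolding \<open>M^n = max 1 (L^n)\<close> .
qed

lemma two_power_radius_condition:
  fixes \<rho> :: real
  assumes "0 < \<rho>" "\<rho> \<le> 1" "t \<le> n"
  shows "\<rho>^n / 2^n / \<rho>^t \<le> 1 / 2^n"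
proof -
  have "\<rho>^n / 2^n / \<rho>^t \<le> \<rho>^t / 2^n / \<rho>^t"
    using assms by (intro divide_right_mono power_decreasing) auto
  thus ?thesis using assms by simp
qed

theorem lemma4p9:
  fixes idx :: "'n::finite \<Rightarrow> nat" and lam :: complex and \<rho> :: real
  assumes "bij_betw idx UNIV {1..CARD('n)}"
    and "0 < \<rho>" and "\<rho> \<le> 1"
  shows "maxdist (moment idx lam) (frontier (Cset idx \<rho> lam))
           \<ge> \<rho> ^ CARD('n) / (4 ^ CARD('n) * max 1 (cmod lam ^ CARD('n)))
         \<and> (lam = 0 \<longrightarrow> maxdist (moment idx 0) (frontier (Cset idx \<rho> 0))
           \<ge> \<rho> ^ CARD('n) / 2 ^ CARD('n))"
proof
  show "maxdist (moment idx lam) (frontier (Cset idx \<rho> lam))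
           \<ge> \<rho> ^ CARD('n) / (4 ^ CARD('n) * max 1 (cmod lam ^ CARD('n)))"
    using assms by (intro maxdist_frontier_Cset_ge four_power_radius_condition) auto
  show "lam = 0 \<longrightarrow> maxdist (moment idx 0) (frontier (Cset idx \<rho> 0))
           \<ge> \<rho> ^ CARD('n) / 2 ^ CARD('n)"
    using assms two_power_radius_condition by (intro impI maxdist_frontier_Cset_ge) auto
qed

end
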